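(* Let $r(\cdot)\in\mathcal{P}^{\log}(\mathbb{R})$ with $r(x)=2$ for all $x\in[0,1]$ and $r^-_{[0,16]}>1$. Then the kernel $K(x,y)=K_1(x-y)K_2(y)$ belongs to $H_{r(\cdot),1}$.
   Context: Here $n=1$. Fix $\beta>0$; $K_1(t)=\chi_{[2,3]}(t)$ and $K_2(t)=t^{-1/2}\big[\log(e/t)\big]^{-\frac{1+\beta}{2}}\chi_{(0,1)}(t)$. Cubes are intervals $Q$; $mQ$ is the concentric interval of length $m\ell(Q)$. $\|f\|_{p(\cdot)}=\inf\{\lambda>0:\int_{\{p<\infty\}}|f/\lambda|^{p(x)}dx+\|(f/\lambda)\chi_{\{p=\infty\}}\|_\infty\le1\}$ for measurable $p(\cdot):\mathbb{R}\to[1,\infty]$. $\mathcal{P}^{\log}(\mathbb{R})$: $1/p$ satisfies $|1/p(x)-1/p(y)|\le c_0/(-\log|x-y|)$ for $|x-y|<1/2$ and $|1/p(x)-1/p_\infty|\le c_\infty/\log(e+|x|)$. $r^-_E=\operatorname{ess\,inf}_Er$. $K\in H_{r(\cdot),1}$ means $\sup_Q\sup_{x,z\in\frac12Q}\sum_{m\ge1}2^m\ell(Q)\frac{\|[K(x,\cdot)-K(z,\cdot)]\chi_{2^mQ\setminus2^{m-1}Q}\|_{r(\cdot)}}{\|\chi_{2^mQ}\|_{r(\cdot)}}<\infty$. *)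

theory Defs
  imports "HOL-Analysis.Analysis" "HOL-Probability.Essential_Supremum"
begin

definition exp_inv :: "(real \<Rightarrow> ereal) \<Rightarrow> real \<Rightarrow> real" where
  "exp_inv p x = (if p x = \<infinity> then 0 else 1 / real_of_ereal (p x))"

text \<open>Log-Hoelder class P^log(R): measurable p with values in [1,infinity],
  local log-Hoelder continuity of 1/p and log-Hoelder decay to 1/p_infinity
  (p_infinity in [1,infinity], i.e. 1/p_infinity in [0,1]).\<close>
definition Plog :: "(real \<Rightarrow> ereal) \<Rightarrow> bool" where
  "Plog p \<longleftrightarrow> p \<in> borel_measurable borel \<and> (\<forall>x. 1 \<le> p x) \<and>
     (\<exists>c0 cinf qinf. 0 \<le> qinf \<and> qinf \<le> 1 \<and>
        (\<forall>x y. 0 < \<bar>x - y\<bar> \<and> \<bar>x - y\<bar> < 1/2 \<longrightarrow>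
              \<bar>exp_inv p x - exp_inv p y\<bar> \<le> c0 / (- ln \<bar>x - y\<bar>)) \<and>
        (\<forall>x. \<bar>exp_inv p x - qinf\<bar> \<le> cinf / ln (exp 1 + \<bar>x\<bar>)))"

definition essinf_on :: "real set \<Rightarrow> (real \<Rightarrow> ereal) \<Rightarrow> ereal" where
  "essinf_on E f = Sup {a. AE x in lebesgue. x \<in> E \<longrightarrow> a \<le> f x}"

definition var_modular :: "(real \<Rightarrow> ereal) \<Rightarrow> (real \<Rightarrow> real) \<Rightarrow> ennreal" where
  "var_modular p f =
     (\<integral>\<^sup>+ x. indicator {x. p x < \<infinity>} x * ennreal (\<bar>f x\<bar> powr real_of_ereal (p x)) \<partial>lebesgue)
     + e2ennreal (esssup lebesgue (\<lambda>x. ereal (\<bar>f x\<bar> * indicator {x. p x = \<infinity>} x)))"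

text \<open>Luxemburg norm (value infinity if f is not in L^{p(.)}).\<close>
definition var_norm :: "(real \<Rightarrow> ereal) \<Rightarrow> (real \<Rightarrow> real) \<Rightarrow> ennreal" where
  "var_norm p f = Inf {ennreal lam | lam. lam > 0 \<and> var_modular p (\<lambda>x. f x / lam) \<le> 1}"

definition intv :: "real \<Rightarrow> real \<Rightarrow> real set" where
  "intv c l = {c - l/2 .. c + l/2}"

definition K1 :: "real \<Rightarrow> real" where
  "K1 t = indicator {2..3} t"

definition K2 :: "real \<Rightarrow> real \<Rightarrow> real" where
  "K2 \<beta> t = t powr (-1/2) * (ln (exp 1 / t)) powr (- (1 + \<beta>) / 2) * indicator {0<..<1} t"

text \<open>The class H_{r(.),1}: sup over intervals Q (centre c, length l > 0) and x,z in Q/2 of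
  sum_{m>=1} 2^m l(Q) ||(K(x,.)-K(z,.)) chi_{2^m Q \ 2^{m-1} Q}||_r / ||chi_{2^m Q}||_r is finite.\<close>
definition H_class :: "(real \<Rightarrow> ereal) \<Rightarrow> (real \<Rightarrow> real \<Rightarrow> real) \<Rightarrow> bool" where
  "H_class r K \<longleftrightarrow>
    (SUP (c, l) \<in> {(c, l). (l::real) > 0}.
       SUP (x, z) \<in> intv c (l/2) \<times> intv c (l/2).
         (\<Sum>m. ennreal (2 ^ Suc m * l) *
              var_norm r (\<lambda>y. (K x y - K z y) *
                 indicator (intv c (2 ^ Suc m * l) - intv c (2 ^ m * l)) y)
              / var_norm r (indicator (intv c (2 ^ Suc m * l))))) < top"

end

theory Submission
  imports Defs
begin

text \<open>
  Since K1 is supported in [2,3] and K2 in (0,1), the difference K(x,.) - K(z,.) vanishes off (0,1)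
  and is dominated by K2 there. As r = 2 on (0,1), every numerator is at most the L^2 norm of K2,
  which is beta^(-1/2) because (1 - log y)^(-beta)/beta is an antiderivative of K2^2.
  For x, z in Q/2 the annulus 2^m Q - 2^(m-1) Q can only contain points y with x - y in [2,3]
  when 1 < 2^m l(Q) < 24; then the denominator is at least 1, since r >= 1 and the interval
  2^m Q has length greater than 1. Hence the series is bounded by beta^(-1/2) times a sum of
  distinct dyadic lengths below 24, i.e. by 48 beta^(-1/2), uniformly in Q, x, z.
\<close>

lemma nn_integral_inverse_times_log_power:
  fixes \<beta> :: real
  assumes "\<beta> > 0"
  shows "(\<integral>\<^sup>+y\<in>{0<..<1}. ennreal (1 / y * (1 - ln y) powr - (1 + \<beta>)) \<partial>lborel) = ennreal (1 / \<beta>)"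
proof -
  define f where "f y = 1 / y * (1 - ln y) powr - (1 + \<beta>)" for y :: real
  define F where "F y = (1 - ln y) powr - \<beta> / \<beta>" for y :: real
  have log_pos: "0 < 1 - ln y" if "0 < y" "y < 1" for y :: real
    using ln_less_zero[of y] that by linarith
  have F_deriv: "DERIV F y :> f y" if "0 < y" "y < 1" for y
  proof -
    have "DERIV (\<lambda>y. 1 - ln y) y :> - (1 / y)"
      using that by (auto intro!: derivative_eq_intros)
    from DERIV_fun_powr[OF this log_pos[OF that], of "- \<beta>"]
    have "DERIV (\<lambda>y. (1 - ln y) powr - \<beta>) y :> \<beta> * f y"
      by (simp add: f_def) (smt (verit))
    from DERIV_cdivide[OF this, of \<beta>] show ?thesis
      unfolding F_def using assms by simp
  qed
  have f_cont: "isCont f y" if "0 < y" "y < 1" for y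
    unfolding f_def using that log_pos[OF that] by (intro continuous_intros) auto
  have "filterlim (\<lambda>y. 1 - ln y) at_top (at_right (0::real))"
    by real_asymp
  then have "(F \<longlongrightarrow> 0) (at_right 0)"
    unfolding F_def using assms by (auto intro!: tendsto_divide_zero tendsto_neg_powr)
  then have F0: "((F \<circ> real_of_ereal) \<longlongrightarrow> 0) (at_right (ereal 0))"
    by (simp add: ereal_tendsto_simps1)
  have "(F \<longlongrightarrow> F 1) (at_left 1)"
    unfolding F_def using assms by (intro tendsto_intros) auto
  then have F1: "((F \<circ> real_of_ereal) \<longlongrightarrow> 1 / \<beta>) (at_left (ereal 1))"
    by (simp add: ereal_tendsto_simps1 F_def)
  have f_nonneg: "AE y in lborel. 0 < ereal y \<longrightarrow> ereal y < 1 \<longrightarrow> 0 \<le> f y"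
    by (auto simp: f_def)
  have "set_integrable lborel (einterval 0 1) f \<and> (LBINT y=0..1. f y) = 1 / \<beta> - 0"
    using interval_integral_FTC_nonneg[of 0 1 F f 0 "1 / \<beta>"] F_deriv f_cont f_nonneg F0 F1
    by (simp add: zero_ereal_def one_ereal_def)
  then have "set_integrable lborel {0<..<1} f" "(LINT y:{0<..<1}|lborel. f y) = 1 / \<beta>"
    by (simp_all add: zero_ereal_def one_ereal_def interval_lebesgue_integral_le_eq)
  moreover have "(\<integral>\<^sup>+y\<in>{0<..<1}. ennreal (f y) \<partial>lborel)
      = (\<integral>\<^sup>+y. ennreal (indicator {0<..<1} y *\<^sub>R f y) \<partial>lborel)"
    by (intro nn_integral_cong) (simp add: indicator_def)
  ultimately show ?thesis
    unfolding f_def[symmetric] set_lebesgue_integral_def set_integrable_def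
    by (subst (asm) nn_integral_eq_integral) (auto simp: f_def indicator_def)
qed

lemma var_norm_le:
  assumes "0 < lam" and "var_modular p (\<lambda>x. f x / lam) \<le> 1"
  shows "var_norm p f \<le> ennreal lam"
  using assms unfolding var_norm_def by (intro Inf_lower) blast

lemma var_modular_finite_exponent:
  assumes "\<And>x. f x \<noteq> 0 \<Longrightarrow> p x < \<infinity>"
  shows "var_modular p f = (\<integral>\<^sup>+x. ennreal (\<bar>f x\<bar> powr real_of_ereal (p x)) \<partial>lebesgue)"
proof -
  have "(\<lambda>x. ereal (\<bar>f x\<bar> * indicator {x. p x = \<infinity>} x)) = (\<lambda>x. 0)"
    using assms by (force simp: indicator_def)
  then have "esssup lebesgue (\<lambda>x. ereal (\<bar>f x\<bar> * indicator {x. p x = \<infinity>} x)) = 0"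
    by (simp add: esssup_const emeasure_completion)
  moreover have "indicator {x. p x < \<infinity>} x * ennreal (\<bar>f x\<bar> powr real_of_ereal (p x))
      = ennreal (\<bar>f x\<bar> powr real_of_ereal (p x))" for x
    using assms[of x] by (cases "f x = 0") (auto simp: indicator_def)
  ultimately show ?thesis
    by (simp add: var_modular_def e2ennreal_neg)
qed

lemma var_norm_zero: "var_norm p (\<lambda>x. 0) = 0"
proof -
  have "var_norm p (\<lambda>x. 0) \<le> ennreal e" if "0 < e" for e
    using that by (intro var_norm_le) (simp_all add: var_modular_finite_exponent)
  then show ?thesis
    by (metis ennreal_le_epsilon add_0 le_zero_eq)
qed

lemma var_norm_le_L2_norm:
  assumes f_meas: "f \<in> borel_measurable lebesgue"
    and p2: "\<And>x. f x \<noteq> 0 \<Longrightarrow> p x = 2"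
    and C: "0 < C" and L2: "(\<integral>\<^sup>+x. ennreal ((f x)\<^sup>2) \<partial>lebesgue) \<le> ennreal (C\<^sup>2)"
  shows "var_norm p f \<le> ennreal C"
proof (rule var_norm_le[OF C])
  have "\<bar>f x / C\<bar> powr real_of_ereal (p x) = 1 / C\<^sup>2 * (f x)\<^sup>2" for x
  proof (cases "f x = 0")
    case False
    then have "\<bar>f x / C\<bar> powr real_of_ereal (p x) = \<bar>f x / C\<bar> ^ 2"
      using p2 by (simp add: powr_numeral del: abs_divide)
    then show ?thesis
      by (simp add: power_divide)
  qed simp
  then have "var_modular p (\<lambda>x. f x / C) = (\<integral>\<^sup>+x. ennreal (1 / C\<^sup>2) * ennreal ((f x)\<^sup>2) \<partial>lebesgue)"
    using p2 by (subst var_modular_finite_exponent) (auto simp flip: ennreal_mult intro!: nn_integral_cong)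
  also have "\<dots> = ennreal (1 / C\<^sup>2) * (\<integral>\<^sup>+x. ennreal ((f x)\<^sup>2) \<partial>lebesgue)"
    using f_meas by (intro nn_integral_cmult) measurable
  also have "\<dots> \<le> ennreal (1 / C\<^sup>2) * ennreal (C\<^sup>2)"
    using L2 by (rule mult_left_mono) simp
  also have "\<dots> = 1"
    using C by (simp flip: ennreal_mult)
  finally show "var_modular p (\<lambda>x. f x / C) \<le> 1" .
qed

lemma emeasure_le_var_modular_indicator:
  assumes p_meas: "p \<in> borel_measurable borel" and p_ge: "\<And>x. 1 \<le> p x"
    and A: "A \<in> sets lborel" and lam: "0 < lam" "lam \<le> 1"
  shows "emeasure lborel (A \<inter> {x. p x < \<infinity>}) \<le> var_modular p (\<lambda>x. indicator A x / lam)"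
proof -
  have S: "A \<inter> {x. p x < \<infinity>} \<in> sets lborel"
    using A p_meas by measurable
  have "indicator (A \<inter> {x. p x < \<infinity>}) x
      \<le> indicator {x. p x < \<infinity>} x * ennreal (\<bar>indicator A x / lam\<bar> powr real_of_ereal (p x))" for x
  proof (cases "x \<in> A \<and> p x < \<infinity>")
    case True
    then obtain t where "p x = ereal t" "1 \<le> t"
      using p_ge[of x] by (cases "p x") auto
    then have "1 \<le> (1 / lam) powr real_of_ereal (p x)"
      using lam by (intro ge_one_powr_ge_zero) auto
    then show ?thesis
      using True lam by (simp add: indicator_def)
  qed (simp add: indicator_def)
  then have "(\<integral>\<^sup>+x. indicator (A \<inter> {x. p x < \<infinity>}) x \<partial>lebesgue)
      \<le> (\<integral>\<^sup>+x. indicator {x. p x < \<infinity>} x * ennreal (\<bar>indicator A x / lam\<bar> powr real_of_ereal (p x)) \<partial>lebesgue)"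
    by (rule nn_integral_mono)
  also have "\<dots> \<le> var_modular p (\<lambda>x. indicator A x / lam)"
    by (simp add: var_modular_def)
  finally show ?thesis
    using S by (simp add: nn_integral_completion)
qed

lemma inverse_le_var_modular_indicator:
  assumes p_meas: "p \<in> borel_measurable borel" and A: "A \<in> sets lborel"
    and T_pos: "emeasure lborel (A \<inter> {x. p x = \<infinity>}) \<noteq> 0" and lam: "0 < lam"
  shows "ennreal (1 / lam) \<le> var_modular p (\<lambda>x. indicator A x / lam)"
proof -
  define T where "T = A \<inter> {x. p x = \<infinity>}"
  have T: "T \<in> sets lborel"
    unfolding T_def using A p_meas by measurable
  define g where "g x = ereal (\<bar>indicator A x / lam\<bar> * indicator {x. p x = \<infinity>} x)" for x
  have g_T: "g x = ereal (1 / lam * indicator T x)" for x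
    using lam by (simp add: g_def T_def indicator_def)
  have "ereal (1 / lam) \<le> esssup lebesgue g"
  proof (rule ccontr)
    assume small: "\<not> ereal (1 / lam) \<le> esssup lebesgue g"
    have "AE x in lebesgue. x \<notin> T"
      using esssup_AE[of g lebesgue]
      by eventually_elim (use small in \<open>auto simp: g_T indicator_def split: if_splits\<close>)
    then have "T \<in> null_sets lborel"
      using T by (simp add: AE_iff_null_sets AE_completion_iff)
    then show False
      using T_pos by (simp add: T_def null_sets_def)
  qed
  then have "ennreal (1 / lam) \<le> e2ennreal (esssup lebesgue g)"
    using e2ennreal_mono by fastforce
  also have "\<dots> \<le> var_modular p (\<lambda>x. indicator A x / lam)"
    unfolding var_modular_def g_def[abs_def, symmetric] by (rule add_increasing) auto
  finally show ?thesis .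
qed

lemma one_le_var_norm_indicator:
  assumes p_meas: "p \<in> borel_measurable borel" and p_ge: "\<And>x. 1 \<le> p x"
    and A: "A \<in> sets lborel" and A_large: "1 < emeasure lborel A"
  shows "1 \<le> var_norm p (indicator A)"
  unfolding var_norm_def
proof (rule Inf_greatest, clarify)
  fix lam :: real
  assume lam: "0 < lam" and modular: "var_modular p (\<lambda>x. indicator A x / lam) \<le> 1"
  show "1 \<le> ennreal lam"
  proof (rule ccontr)
    assume "\<not> 1 \<le> ennreal lam"
    then have "lam < 1"
      by simp
    show False
    proof (cases "emeasure lborel (A \<inter> {x. p x = \<infinity>}) = 0")
      case True
      have parts: "A \<inter> {x. p x < \<infinity>} \<in> sets lborel" "A \<inter> {x. p x = \<infinity>} \<in> sets lborel"
        using A p_meas by measurable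
      have "A = (A \<inter> {x. p x < \<infinity>}) \<union> (A \<inter> {x. p x = \<infinity>})"
        by (auto simp: less_top)
      then have "emeasure lborel A \<le> emeasure lborel (A \<inter> {x. p x < \<infinity>}) + 0"
        using emeasure_subadditive[OF parts] True by simp
      also have "\<dots> \<le> 1"
        using emeasure_le_var_modular_indicator[OF p_meas p_ge A lam] \<open>lam < 1\<close> modular by simp
      finally show False
        using A_large by simp
    next
      case False
      have "1 < ennreal (1 / lam)"
        using lam \<open>lam < 1\<close> by simp
      also have "\<dots> \<le> var_modular p (\<lambda>x. indicator A x / lam)"
        by (rule inverse_le_var_modular_indicator[OF p_meas A False lam])
      also have "\<dots> \<le> 1"
        by (rule modular)
      finally show False
        by simp
    qed
  qed
qed

lemma ennreal_mult_divide_le: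
  fixes N D :: ennreal
  assumes "1 \<le> D" and "N \<le> ennreal b" and "0 \<le> a"
  shows "ennreal a * N / D \<le> ennreal (a * b)"
proof -
  have "ennreal a * N / D \<le> ennreal a * N"
  proof (rule divide_le_posI_ennreal)
    show "0 < D"
      using assms(1) by (simp add: order_less_le_trans[OF zero_less_one])
    show "ennreal a * N \<le> D * (ennreal a * N)"
      using mult_right_mono[OF assms(1), of "ennreal a * N"] by simp
  qed
  also have "\<dots> \<le> ennreal a * ennreal b"
    by (rule mult_left_mono[OF assms(2)]) simp
  finally show ?thesis
    using assms(3) by (simp add: ennreal_mult')
qed

lemma H_classI:
  fixes a :: "real \<Rightarrow> nat \<Rightarrow> real"
  assumes summand_le: "\<And>c l x z m. 0 < l \<Longrightarrow> x \<in> intv c (l / 2) \<Longrightarrow> z \<in> intv c (l / 2) \<Longrightarrow>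
      ennreal (2 ^ Suc m * l) * var_norm r (\<lambda>y. (K x y - K z y)
        * indicator (intv c (2 ^ Suc m * l) - intv c (2 ^ m * l)) y)
        / var_norm r (indicator (intv c (2 ^ Suc m * l))) \<le> ennreal (a l m)"
    and a_nonneg: "\<And>l m. 0 < l \<Longrightarrow> 0 \<le> a l m"
    and partial_sums_le: "\<And>l n. 0 < l \<Longrightarrow> (\<Sum>m<n. a l m) \<le> B"
  shows "H_class r K"
proof -
  have series_le: "(\<Sum>m. ennreal (2 ^ Suc m * l) * var_norm r (\<lambda>y. (K x y - K z y)
        * indicator (intv c (2 ^ Suc m * l) - intv c (2 ^ m * l)) y)
        / var_norm r (indicator (intv c (2 ^ Suc m * l)))) \<le> ennreal B"
    if l: "0 < l" and x: "x \<in> intv c (l / 2)" and z: "z \<in> intv c (l / 2)" for c l x z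
  proof (intro suminf_le_const summableI order_trans[OF sum_mono[OF summand_le[OF l x z]]])
    show "(\<Sum>m<n. ennreal (a l m)) \<le> ennreal B" for n
      using a_nonneg[OF l] partial_sums_le[OF l] by (simp add: sum_ennreal ennreal_leI)
  qed
  show ?thesis
    unfolding H_class_def
    by (rule order_le_less_trans[of _ "ennreal B"]) (auto intro!: SUP_least series_le simp del: power_Suc)
qed

lemma sum_dyadic_below_le:
  fixes l B :: real
  assumes "0 < l" and "0 \<le> B"
  shows "(\<Sum>m<n. if 2 ^ Suc m * l < B then 2 ^ Suc m * l else 0) \<le> 2 * B"
proof -
  have "(\<Sum>m<n. if 2 ^ Suc m * l < B then 2 ^ Suc m * l else 0) \<le> min (2 ^ Suc n * l) (2 * B)"
    by (induction n) (use assms in \<open>auto simp: algebra_simps\<close>)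
  then show ?thesis
    by simp
qed

lemma K2_squared:
  "(K2 \<beta> y)\<^sup>2 = 1 / y * (1 - ln y) powr - (1 + \<beta>) * indicator {0<..<1} y"
proof (cases "0 < y \<and> y < 1")
  case True
  then have "ln y < 0" "ln (exp 1 / y) = 1 - ln y"
    by (auto intro: ln_less_zero simp: ln_div)
  then have log_pos: "0 < ln (exp 1 / y)"
    by linarith
  have "(y powr (- 1 / 2))\<^sup>2 = 1 / y"
    using True by (simp add: power2_eq_square powr_minus_divide flip: powr_add)
  moreover have "(ln (exp 1 / y) powr (- (1 + \<beta>) / 2))\<^sup>2 = ln (exp 1 / y) powr - (1 + \<beta>)"
    using log_pos by (simp add: power2_eq_square flip: powr_add)
  ultimately show ?thesis
    using True by (simp add: K2_def power_mult_distrib ln_div)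
qed (auto simp: K2_def)

lemma nn_integral_K2_squared:
  assumes "\<beta> > 0"
  shows "(\<integral>\<^sup>+y. ennreal ((K2 \<beta> y)\<^sup>2) \<partial>lebesgue) = ennreal (1 / \<beta>)"
proof -
  have "(\<integral>\<^sup>+y. ennreal ((K2 \<beta> y)\<^sup>2) \<partial>lebesgue)
      = (\<integral>\<^sup>+y\<in>{0<..<1}. ennreal (1 / y * (1 - ln y) powr - (1 + \<beta>)) \<partial>lborel)"
    by (subst nn_integral_completion[symmetric])
      (auto intro!: nn_integral_cong simp: K2_squared indicator_def)
  also have "\<dots> = ennreal (1 / \<beta>)"
    by (rule nn_integral_inverse_times_log_power[OF assms])
  finally show ?thesis .
qed

lemma var_norm_le_if_dominated_by_K2:
  assumes \<beta>: "0 < \<beta>" and p2: "\<forall>y\<in>{0<..<1}. p y = 2"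
    and f_meas: "f \<in> borel_measurable lebesgue" and f_le: "\<And>y. \<bar>f y\<bar> \<le> K2 \<beta> y"
  shows "var_norm p f \<le> ennreal (1 / sqrt \<beta>)"
proof (rule var_norm_le_L2_norm[OF f_meas])
  show "p y = 2" if "f y \<noteq> 0" for y
  proof -
    have "K2 \<beta> y \<noteq> 0"
      using f_le[of y] that by auto
    then show ?thesis
      using p2 by (auto simp: K2_def)
  qed
  have "(f y)\<^sup>2 \<le> (K2 \<beta> y)\<^sup>2" for y
    using f_le[of y] abs_ge_zero by (metis power2_abs power_mono)
  then have "(\<integral>\<^sup>+y. ennreal ((f y)\<^sup>2) \<partial>lebesgue) \<le> (\<integral>\<^sup>+y. ennreal ((K2 \<beta> y)\<^sup>2) \<partial>lebesgue)"
    by (intro nn_integral_mono) simp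
  then show "(\<integral>\<^sup>+y. ennreal ((f y)\<^sup>2) \<partial>lebesgue) \<le> ennreal ((1 / sqrt \<beta>)\<^sup>2)"
    using \<beta> by (simp add: nn_integral_K2_squared power_divide)
qed (use \<beta> in simp)

lemma dyadic_annulus_scale_bounds:
  assumes "x \<in> intv c (l / 2)" and "y \<in> intv c P - intv c (P / 2)" and "2 * l \<le> P"
    and "2 \<le> x - y" and "x - y \<le> 3"
  shows "1 < P \<and> P < 24"
  using assms unfolding intv_def by auto

lemma kernel_summand_le:
  assumes \<beta>: "0 < \<beta>" and p_meas: "p \<in> borel_measurable borel" and p_ge: "\<And>x. 1 \<le> p x"
    and p2: "\<forall>y\<in>{0<..<1}. p y = 2"
    and l: "0 < l" and x: "x \<in> intv c (l / 2)" and z: "z \<in> intv c (l / 2)"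
  shows "ennreal (2 ^ Suc m * l) * var_norm p (\<lambda>y. (K1 (x - y) * K2 \<beta> y - K1 (z - y) * K2 \<beta> y)
            * indicator (intv c (2 ^ Suc m * l) - intv c (2 ^ m * l)) y)
            / var_norm p (indicator (intv c (2 ^ Suc m * l)))
         \<le> ennreal ((if 2 ^ Suc m * l < 24 then 2 ^ Suc m * l else 0) / sqrt \<beta>)"
proof -
  define P where "P = 2 ^ Suc m * l"
  have P: "2 * l \<le> P" "2 ^ m * l = P / 2"
    using l by (simp_all add: P_def)
  define G where "G y = (K1 (x - y) * K2 \<beta> y - K1 (z - y) * K2 \<beta> y)
      * indicator (intv c P - intv c (P / 2)) y" for y
  have G_support: "1 < P \<and> P < 24" if "G y \<noteq> 0" for y
  proof -
    have "y \<in> intv c P - intv c (P / 2)" "(2 \<le> x - y \<and> x - y \<le> 3) \<or> (2 \<le> z - y \<and> z - y \<le> 3)"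
      using that by (auto simp: G_def K1_def indicator_def split: if_splits)
    then show ?thesis
      using dyadic_annulus_scale_bounds[OF x _ P(1)] dyadic_annulus_scale_bounds[OF z _ P(1)] by blast
  qed
  have "ennreal P * var_norm p G / var_norm p (indicator (intv c P))
      \<le> ennreal ((if P < 24 then P else 0) / sqrt \<beta>)"
  proof (cases "1 < P \<and> P < 24")
    case True
    have "0 \<le> K2 \<beta> y" for y
      by (simp add: K2_def)
    then have "\<bar>G y\<bar> \<le> K2 \<beta> y" for y
      by (auto simp: G_def K1_def indicator_def)
    moreover have "G \<in> borel_measurable lebesgue"
      unfolding G_def K1_def K2_def intv_def by (intro measurable_completion) measurable
    ultimately have "var_norm p G \<le> ennreal (1 / sqrt \<beta>)"
      using var_norm_le_if_dominated_by_K2[OF \<beta> p2] by blast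
    moreover have "1 \<le> var_norm p (indicator (intv c P))"
      using True by (intro one_le_var_norm_indicator[OF p_meas p_ge]) (auto simp: intv_def)
    ultimately show ?thesis
      using True ennreal_mult_divide_le[of _ "var_norm p G" "1 / sqrt \<beta>" P] by simp
  next
    case False
    then have "G = (\<lambda>y. 0)"
      using G_support by blast
    then show ?thesis
      by (simp add: var_norm_zero)
  qed
  then show ?thesis
    unfolding G_def[abs_def] P(2) P_def .
qed

theorem mainTheorem17:
  fixes \<beta> :: real and r :: "real \<Rightarrow> ereal"
  assumes "\<beta> > 0"
    and "Plog r"
    and "\<forall>x \<in> {0..1}. r x = 2"
    and "essinf_on {0..16} r > 1"
  shows "H_class r (\<lambda>x y. K1 (x - y) * K2 \<beta> y)"
proof -
  have r_meas: "r \<in> borel_measurable borel" and r_ge: "\<And>x. 1 \<le> r x"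
    using \<open>Plog r\<close> by (auto simp: Plog_def)
  have r2: "\<forall>y\<in>{0<..<1}. r y = 2"
    using assms(3) by auto
  have "(\<Sum>m<n. (if 2 ^ Suc m * l < 24 then 2 ^ Suc m * l else 0) / sqrt \<beta>) \<le> 48 / sqrt \<beta>"
    if "0 < l" for l :: real and n
    using sum_dyadic_below_le[OF that, of 24 n] \<open>\<beta> > 0\<close>
    by (simp add: sum_divide_distrib[symmetric] divide_right_mono)
  then show ?thesis
    using \<open>\<beta> > 0\<close>
    by (intro H_classI[where a = "\<lambda>l m. (if 2 ^ Suc m * l < 24 then 2 ^ Suc m * l else 0) / sqrt \<beta>"]
        kernel_summand_le[OF \<open>\<beta> > 0\<close> r_meas r_ge r2]) auto
qed

end
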